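(* Let $k\in\mathbb N_0$. Let $S$ be the basic spinor representation of $Spin(3)$, realized as a $2$-dimensional irreducible left module over the complex Clifford algebra $\mathbb C_3$ (generated by $e_1,e_2,e_3$ with $e_je_l+e_le_j=-2\delta_{jl}$), and let $v^{\pm}$ be nonzero vectors with $-ie_{12}v^{\pm}=\pm v^{\pm}$ (where $e_{ij}=e_ie_j$). Let $\mathcal M_k(\mathbb R^3,S)$ be the space of $S$-valued polynomials $P$ on $\mathbb R^3$, homogeneous of degree $k$, with $\partial P=0$, where $\partial=e_1\frac{\partial}{\partial x_1}+e_2\frac{\partial}{\partial x_2}+e_3\frac{\partial}{\partial x_3}$. Consider on it the operators $$\tilde H=-i\Big(\frac{e_{12}}{2}+x_2\frac{\partial}{\partial x_1}-x_1\frac{\partial}{\partial x_2}\Big),\quad \tilde X^{\pm}=X^{\pm}+\omega^{\pm},$$ where $X^{+}=-2x_3\frac{\partial}{\partial z}+\overline z\frac{\partial}{\partial x_3}$, $X^{-}=2x_3\frac{\partial}{\partial\overline z}- z\frac{\partial}{\partial x_3}$, $z=x_1+ix_2$, $\frac{\partial}{\partial z}=\frac12(\partial_{x_1}-i\partial_{x_2})$, $\frac{\partial}{\partial \overline z}=\frac12(\partial_{x_1}+i\partial_{x_2})$, and $\omega^+=\frac12(e_{31}+ie_{23})$, $\omega^-=\frac12(-e_{31}+ie_{23})$ act by left multiplication. Then the (irreducible) $\mathfrak{sl}(2,\mathbb C)$-module $\mathcal M_k(\mathbb R^3,S)$ has a basis consisting of the polynomials $$F^k_0=\frac{1}{k!\,2^k}\,\overline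 z^k v^+\quad\text{and}\quad F^k_j=(\tilde X^-)^jF^k_0,\ \ 0<j\le 2k+1.$$ In addition, for each $j=0,\dots,2k+1$, $F^k_j$ is a weight vector with weight $k+\frac12-j$, i.e. $\tilde H F^k_j=(k+\frac12-j)F^k_j$.
   Context: The operators $\tilde H,\tilde X^+,\tilde X^-$ satisfy $[\tilde X^+,\tilde X^-]=2\tilde H$ and $[\tilde H,\tilde X^\pm]=\pm\tilde X^\pm$; they are the complexified infinitesimal action $L_{ij}=\frac{e_{ij}}2+x_j\partial_{x_i}-x_i\partial_{x_j}$ of $\mathfrak{so}(3)$ on $S$-valued polynomials, via $\tilde H=-iL_{12}$, $\tilde X^+=L_{31}+iL_{23}$, $\tilde X^-=-L_{31}+iL_{23}$. *)

theory Defs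
  imports "HOL-Analysis.Analysis" "HOL-Library.Function_Algebras"
begin

text \<open>S-valued polynomials on R^3, with S realised as C^2 (Clifford generators acting
by 2x2 complex matrices).  A polynomial is given by its coefficient function:
P (a,b,c) is the coefficient of x1^a x2^b x3^c (finitely supported, in fact
we only use homogeneous ones).\<close>

type_synonym spoly = "nat \<times> nat \<times> nat \<Rightarrow> complex^2"

definition homog :: "nat \<Rightarrow> spoly \<Rightarrow> bool" where
  "homog k P \<longleftrightarrow> (\<forall>a b c. a + b + c \<noteq> k \<longrightarrow> P (a,b,c) = 0)"

definition sc :: "complex \<Rightarrow> spoly \<Rightarrow> spoly" where
  "sc t P = (\<lambda>m. t *s P m)"

definition cl :: "complex^2^2 \<Rightarrow> spoly \<Rightarrow> spoly" where
  "cl M P = (\<lambda>m. M *v P m)"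

definition const_poly :: "complex^2 \<Rightarrow> spoly" where
  "const_poly v = (\<lambda>m. if m = (0,0,0) then v else 0)"

definition dx1 :: "spoly \<Rightarrow> spoly" where
  "dx1 P = (\<lambda>(a,b,c). of_nat (a+1) *s P (a+1,b,c))"
definition dx2 :: "spoly \<Rightarrow> spoly" where
  "dx2 P = (\<lambda>(a,b,c). of_nat (b+1) *s P (a,b+1,c))"
definition dx3 :: "spoly \<Rightarrow> spoly" where
  "dx3 P = (\<lambda>(a,b,c). of_nat (c+1) *s P (a,b,c+1))"

definition mx1 :: "spoly \<Rightarrow> spoly" where
  "mx1 P = (\<lambda>(a,b,c). if a = 0 then 0 else P (a-1,b,c))"
definition mx2 :: "spoly \<Rightarrow> spoly" where
  "mx2 P = (\<lambda>(a,b,c). if b = 0 then 0 else P (a,b-1,c))"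
definition mx3 :: "spoly \<Rightarrow> spoly" where
  "mx3 P = (\<lambda>(a,b,c). if c = 0 then 0 else P (a,b,c-1))"

definition mz :: "spoly \<Rightarrow> spoly" where
  "mz P = mx1 P + sc \<i> (mx2 P)"
definition mzbar :: "spoly \<Rightarrow> spoly" where
  "mzbar P = mx1 P - sc \<i> (mx2 P)"
definition dz :: "spoly \<Rightarrow> spoly" where
  "dz P = sc (1/2) (dx1 P - sc \<i> (dx2 P))"
definition dzbar :: "spoly \<Rightarrow> spoly" where
  "dzbar P = sc (1/2) (dx1 P + sc \<i> (dx2 P))"

definition dirac :: "complex^2^2 \<Rightarrow> complex^2^2 \<Rightarrow> complex^2^2 \<Rightarrow> spoly \<Rightarrow> spoly" where
  "dirac E1 E2 E3 P = cl E1 (dx1 P) + cl E2 (dx2 P) + cl E3 (dx3 P)"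

definition Mk :: "complex^2^2 \<Rightarrow> complex^2^2 \<Rightarrow> complex^2^2 \<Rightarrow> nat \<Rightarrow> spoly set" where
  "Mk E1 E2 E3 k = {P. homog k P \<and> dirac E1 E2 E3 P = 0}"

definition Htil :: "complex^2^2 \<Rightarrow> complex^2^2 \<Rightarrow> spoly \<Rightarrow> spoly" where
  "Htil E1 E2 P = sc (-\<i>) (sc (1/2) (cl (E1 ** E2) P) + mx2 (dx1 P) - mx1 (dx2 P))"

definition Xplus :: "spoly \<Rightarrow> spoly" where
  "Xplus P = sc (-2) (mx3 (dz P)) + mzbar (dx3 P)"
definition Xminus :: "spoly \<Rightarrow> spoly" where
  "Xminus P = sc 2 (mx3 (dzbar P)) - mz (dx3 P)"

definition omega_plus :: "complex^2^2 \<Rightarrow> complex^2^2 \<Rightarrow> complex^2^2 \<Rightarrow> spoly \<Rightarrow> spoly" where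
  "omega_plus E1 E2 E3 P = sc (1/2) (cl (E3 ** E1) P + sc \<i> (cl (E2 ** E3) P))"
definition omega_minus :: "complex^2^2 \<Rightarrow> complex^2^2 \<Rightarrow> complex^2^2 \<Rightarrow> spoly \<Rightarrow> spoly" where
  "omega_minus E1 E2 E3 P = sc (1/2) (- cl (E3 ** E1) P + sc \<i> (cl (E2 ** E3) P))"

definition Xtil_plus where
  "Xtil_plus E1 E2 E3 P = Xplus P + omega_plus E1 E2 E3 P"
definition Xtil_minus where
  "Xtil_minus E1 E2 E3 P = Xminus P + omega_minus E1 E2 E3 P"

definition F0 :: "nat \<Rightarrow> complex^2 \<Rightarrow> spoly" where
  "F0 k v = sc (1 / (of_nat (fact k) * 2 ^ k)) ((mzbar ^^ k) (const_poly v))"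
definition Fj :: "complex^2^2 \<Rightarrow> complex^2^2 \<Rightarrow> complex^2^2 \<Rightarrow> nat \<Rightarrow> complex^2 \<Rightarrow> nat \<Rightarrow> spoly" where
  "Fj E1 E2 E3 k v j = (Xtil_minus E1 E2 E3 ^^ j) (F0 k v)"

definition is_basis_fam :: "(nat \<Rightarrow> spoly) \<Rightarrow> nat \<Rightarrow> spoly set \<Rightarrow> bool" where
  "is_basis_fam F n V \<longleftrightarrow>
     (\<forall>j\<le>n. F j \<in> V) \<and>
     (\<forall>c. (\<Sum>j\<le>n. sc (c j) (F j)) = 0 \<longrightarrow> (\<forall>j\<le>n. c j = 0)) \<and>
     (\<forall>P\<in>V. \<exists>c. P = (\<Sum>j\<le>n. sc (c j) (F j)))"

end

theory Submission
  imports Defs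
begin

text \<open>\<open>F\<^sub>0 = zbar\<^sup>k v\<^sup>+/(k! 2\<^sup>k)\<close> is a highest weight vector: it is monogenic, has
  \<open>H\<close>-weight \<open>k + 1/2\<close> and is killed by \<open>X\<^sup>+\<close>. Since \<open>X\<^sup>-\<close> commutes with the Dirac
  operator, preserves the degree and lowers the weight by one, the \<open>\<mathfrak>sl\<^sub>2\<close> relations
  make \<open>F\<^sub>0, \<dots>, F\<^sub>2\<^sub>k\<^sub>+\<^sub>1\<close> nonzero weight vectors of distinct weights, hence linearly
  independent. They span because \<open>dim M\<^sub>k \<le> 2k + 2\<close>: a monogenic polynomial is determined
  by its restriction to the plane \<open>x\<^sub>3 = 0\<close>, a homogeneous \<open>S\<close>-valued polynomial of degree
  \<open>k\<close> in two variables.\<close>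

lemma spoly_eqI: "(\<And>a b c. P (a,b,c) = Q (a,b,c)) \<Longrightarrow> P = Q"
  by (rule ext) auto

lemma sc_apply: "sc t P m = t *s P m" by (simp add: sc_def)
lemma cl_apply: "cl M P m = M *v P m" by (simp add: cl_def)
lemma dx1_apply: "dx1 P (a,b,c) = of_nat (a+1) *s P (a+1,b,c)" by (simp add: dx1_def)
lemma dx2_apply: "dx2 P (a,b,c) = of_nat (b+1) *s P (a,b+1,c)" by (simp add: dx2_def)
lemma dx3_apply: "dx3 P (a,b,c) = of_nat (c+1) *s P (a,b,c+1)" by (simp add: dx3_def)
lemma mx1_apply_0: "mx1 P (0,b,c) = 0" by (simp add: mx1_def)
lemma mx1_apply_Suc: "mx1 P (Suc a,b,c) = P (a,b,c)" by (simp add: mx1_def)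
lemma mx2_apply_0: "mx2 P (a,0,c) = 0" by (simp add: mx2_def)
lemma mx2_apply_Suc: "mx2 P (a,Suc b,c) = P (a,b,c)" by (simp add: mx2_def)
lemma mx3_apply_0: "mx3 P (a,b,0) = 0" by (simp add: mx3_def)
lemma mx3_apply_Suc: "mx3 P (a,b,Suc c) = P (a,b,c)" by (simp add: mx3_def)

lemmas coeff_simps = sc_apply cl_apply dx1_apply dx2_apply dx3_apply
  mx1_apply_0 mx1_apply_Suc mx2_apply_0 mx2_apply_Suc mx3_apply_0 mx3_apply_Suc

lemma nat_cases_0_1_SucSuc: obtains "a = 0" | "a = Suc 0" | n where "a = Suc (Suc n)"
  by (metis not0_implies_Suc)

lemma matrix_mul_rneg [simp]: "(A::'a::comm_ring_1^'n^'m) ** (- B) = - (A ** B)"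
  by (simp add: matrix_matrix_mult_def vec_eq_iff sum_negf)
lemma matrix_mul_lneg [simp]: "(- A::'a::comm_ring_1^'n^'m) ** B = - (A ** B)"
  by (simp add: matrix_matrix_mult_def vec_eq_iff sum_negf)
lemma matrix_vector_mul_lneg [simp]: "(- A::'a::comm_ring_1^'n^'m) *v x = - (A *v x)"
  by (simp add: matrix_vector_mult_def vec_eq_iff sum_negf)
lemma matrix_vector_mul_rneg [simp]: "(A::'a::comm_ring_1^'n^'m) *v (- x) = - (A *v x)"
  by (simp add: matrix_vector_mult_def vec_eq_iff sum_negf)

lemmas matrix_vector_simps = vector_scalar_commute matrix_vector_right_distrib
  matrix_vector_mult_diff_distrib vector_smult_assoc vector_ssub_ldistrib vector_smult_rneg
  matrix_vector_mul_assoc vector_add_ldistrib matrix_mul_assoc[symmetric]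
lemmas component_simps = vec_eq_iff vector_add_component vector_mult_component
  vector_smult_component vector_minus_component vector_uminus_component zero_index
  numeral_index one_index
lemmas operator_defs = Htil_def Xtil_minus_def Xminus_def omega_minus_def mz_def dzbar_def
  Xtil_plus_def Xplus_def omega_plus_def mzbar_def dz_def

text \<open>Each operator shifts every exponent
  by at most one, so splitting each exponent into \<open>0\<close>, \<open>1\<close> and \<open>\<ge> 2\<close> resolves all
  boundary cases of \<open>mx\<^sub>i\<close> in a composition of two operators.\<close>
lemma Htil_mzbar: "Htil E1 E2 (mzbar P) = mzbar (Htil E1 E2 P) + mzbar P"
  apply (rule spoly_eqI)
  subgoal for a b c
    by (cases a rule: nat_cases_0_1_SucSuc; cases b rule: nat_cases_0_1_SucSuc;
        cases c rule: nat_cases_0_1_SucSuc; simp add: operator_defs coeff_simps;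
        (simp only: matrix_vector_simps matrix_mul_rneg matrix_mul_lneg matrix_vector_mul_lneg
          matrix_vector_mul_rneg)?;
        (simp only: component_simps)?; (simp add: divide_simps)?; (simp add: algebra_simps)?)
  done

lemma dirac_mzbar: "dirac E1 E2 E3 (mzbar P) = mzbar (dirac E1 E2 E3 P) + cl E1 P - sc \<i> (cl E2 P)"
  apply (rule spoly_eqI)
  subgoal for a b c
    by (cases a rule: nat_cases_0_1_SucSuc; cases b rule: nat_cases_0_1_SucSuc;
        cases c rule: nat_cases_0_1_SucSuc;
        simp add: operator_defs dirac_def coeff_simps matrix_vector_simps;
        (simp only: component_simps)?; (simp add: divide_simps)?; (simp add: algebra_simps)?)
  done

lemma Xtil_plus_mzbar: "Xtil_plus E1 E2 E3 (mzbar P) = mzbar (Xtil_plus E1 E2 E3 P)"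
  apply (rule spoly_eqI)
  subgoal for a b c
    by (cases a rule: nat_cases_0_1_SucSuc; cases b rule: nat_cases_0_1_SucSuc;
        cases c rule: nat_cases_0_1_SucSuc; simp add: operator_defs coeff_simps matrix_vector_simps;
        (simp only: component_simps)?; (simp add: divide_simps)?; (simp add: algebra_simps)?)
  done

lemma cl_mzbar: "cl M (mzbar P) = mzbar (cl M P)"
  apply (rule spoly_eqI)
  subgoal for a b c
    by (cases a; cases b; simp add: mzbar_def coeff_simps matrix_vector_simps)
  done

lemma Htil_const_poly: "Htil E1 E2 (const_poly v) = const_poly ((-\<i>/2) *s ((E1**E2) *v v))"
  apply (rule spoly_eqI)
  subgoal for a b c
    by (cases a; cases b; cases c; simp add: Htil_def const_poly_def coeff_simps matrix_vector_simps)
  done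

lemma dirac_const_poly: "dirac E1 E2 E3 (const_poly v) = 0"
  apply (rule spoly_eqI)
  subgoal for a b c
    by (simp add: const_poly_def dirac_def coeff_simps)
  done

lemma Xtil_plus_const_poly:
  "Xtil_plus E1 E2 E3 (const_poly v) = const_poly ((1/2) *s ((E3**E1) *v v + \<i> *s ((E2**E3) *v v)))"
  apply (rule spoly_eqI)
  subgoal for a b c
    by (cases a; cases b; cases c; simp add: operator_defs const_poly_def coeff_simps matrix_vector_simps)
  done

lemma cl_const_poly: "cl M (const_poly v) = const_poly (M *v v)"
  by (rule ext) (simp add: const_poly_def cl_apply)

locale clifford3 =
  fixes E1 E2 E3 :: "complex^2^2"
  assumes E1_sq: "E1 ** E1 = - mat 1" and E2_sq: "E2 ** E2 = - mat 1" and E3_sq: "E3 ** E3 = - mat 1"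
    and anticomm12: "E1 ** E2 + E2 ** E1 = 0" and anticomm13: "E1 ** E3 + E3 ** E1 = 0"
    and anticomm23: "E2 ** E3 + E3 ** E2 = 0"
begin

lemma E2_E1: "E2 ** E1 = - (E1 ** E2)" using anticomm12 by (simp add: eq_neg_iff_add_eq_0 add.commute)
lemma E3_E1: "E3 ** E1 = - (E1 ** E3)" using anticomm13 by (simp add: eq_neg_iff_add_eq_0 add.commute)
lemma E3_E2: "E3 ** E2 = - (E2 ** E3)" using anticomm23 by (simp add: eq_neg_iff_add_eq_0 add.commute)
lemma E2_E1_left: "E2 ** (E1 ** Y) = - (E1 ** (E2 ** Y))" by (simp add: matrix_mul_assoc E2_E1)
lemma E3_E1_left: "E3 ** (E1 ** Y) = - (E1 ** (E3 ** Y))" by (simp add: matrix_mul_assoc E3_E1)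
lemma E3_E2_left: "E3 ** (E2 ** Y) = - (E2 ** (E3 ** Y))" by (simp add: matrix_mul_assoc E3_E2)
lemma E1_sq_left: "E1 ** (E1 ** Y) = - Y" by (simp add: matrix_mul_assoc E1_sq)
lemma E2_sq_left: "E2 ** (E2 ** Y) = - Y" by (simp add: matrix_mul_assoc E2_sq)
lemma E3_sq_left: "E3 ** (E3 ** Y) = - Y" by (simp add: matrix_mul_assoc E3_sq)

lemmas clifford_simps = E2_E1 E3_E1 E3_E2 E2_E1_left E3_E1_left E3_E2_left
  E1_sq E2_sq E3_sq E1_sq_left E2_sq_left E3_sq_left

lemma Htil_Xtil_minus:
  "Htil E1 E2 (Xtil_minus E1 E2 E3 P) = Xtil_minus E1 E2 E3 (Htil E1 E2 P) - Xtil_minus E1 E2 E3 P"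
  apply (rule spoly_eqI)
  subgoal for a b c
    by (cases a rule: nat_cases_0_1_SucSuc; cases b rule: nat_cases_0_1_SucSuc;
        cases c rule: nat_cases_0_1_SucSuc; simp add: operator_defs coeff_simps;
        (simp only: matrix_vector_simps matrix_mul_rneg matrix_mul_lneg matrix_vector_mul_lneg
          matrix_vector_mul_rneg clifford_simps matrix_vector_mul_lid minus_minus)?;
        (simp only: component_simps)?; (simp add: divide_simps)?; (simp add: algebra_simps)?)
  done

lemma dirac_Xtil_minus: "dirac E1 E2 E3 (Xtil_minus E1 E2 E3 P) = Xtil_minus E1 E2 E3 (dirac E1 E2 E3 P)"
  apply (rule spoly_eqI)
  subgoal for a b c
    by (cases a rule: nat_cases_0_1_SucSuc; cases b rule: nat_cases_0_1_SucSuc;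
        cases c rule: nat_cases_0_1_SucSuc;
        simp add: operator_defs dirac_def coeff_simps matrix_vector_simps;
        (simp add: clifford_simps)?; (simp only: component_simps)?; (simp add: divide_simps)?;
        (simp add: algebra_simps)?)
  done

lemma Xtil_plus_Xtil_minus:
  "Xtil_plus E1 E2 E3 (Xtil_minus E1 E2 E3 P)
    = Xtil_minus E1 E2 E3 (Xtil_plus E1 E2 E3 P) + sc 2 (Htil E1 E2 P)"
  apply (rule spoly_eqI)
  subgoal for a b c
    by (cases a rule: nat_cases_0_1_SucSuc; cases b rule: nat_cases_0_1_SucSuc;
        cases c rule: nat_cases_0_1_SucSuc; simp add: operator_defs coeff_simps matrix_vector_simps;
        (simp add: clifford_simps)?; (simp only: component_simps)?; (simp add: divide_simps)?;
        (simp add: algebra_simps)?)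
  done

end

interpretation spoly: vector_space sc
  by unfold_locales
    (simp_all add: sc_def fun_eq_iff vector_add_ldistrib vector_sadd_rdistrib vector_smult_assoc)

interpretation spoly_pair: vector_space_pair sc sc ..

abbreviation linear_op :: "(spoly \<Rightarrow> spoly) \<Rightarrow> bool" where
  "linear_op f \<equiv> Vector_Spaces.linear sc sc f"

lemma linear_opI:
  "(\<And>P Q. f (P + Q) = f P + f Q) \<Longrightarrow> (\<And>t P. f (sc t P) = sc t (f P)) \<Longrightarrow> linear_op f"
  by (simp add: Vector_Spaces.linear_iff spoly.vector_space_axioms)

lemma linear_op_compose: "linear_op f \<Longrightarrow> linear_op g \<Longrightarrow> linear_op (\<lambda>P. f (g P))"
  using Vector_Spaces.linear_compose[of sc sc g sc f] by (simp add: comp_def)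

lemma linear_dx1: "linear_op dx1"
  by (rule linear_opI) (auto simp: fun_eq_iff dx1_def sc_def vector_add_ldistrib
      vector_smult_assoc mult.commute vector_sadd_rdistrib distrib_left)
lemma linear_dx2: "linear_op dx2"
  by (rule linear_opI) (auto simp: fun_eq_iff dx2_def sc_def vector_add_ldistrib
      vector_smult_assoc mult.commute vector_sadd_rdistrib distrib_left)
lemma linear_dx3: "linear_op dx3"
  by (rule linear_opI) (auto simp: fun_eq_iff dx3_def sc_def vector_add_ldistrib
      vector_smult_assoc mult.commute vector_sadd_rdistrib distrib_left)
lemma linear_mx1: "linear_op mx1" by (rule linear_opI) (auto simp: fun_eq_iff mx1_def sc_def)
lemma linear_mx2: "linear_op mx2" by (rule linear_opI) (auto simp: fun_eq_iff mx2_def sc_def)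
lemma linear_mx3: "linear_op mx3" by (rule linear_opI) (auto simp: fun_eq_iff mx3_def sc_def)
lemma linear_cl: "linear_op (cl M)"
  by (rule linear_opI)
    (auto simp: fun_eq_iff cl_def sc_def matrix_vector_right_distrib vector_scalar_commute)

text \<open>From here on polynomials are handled as vectors rather than pointwise.\<close>
declare plus_fun_apply [simp del] minus_apply [simp del] uminus_apply [simp del]
  zero_fun_apply [simp del]

lemma linear_op_funpow: "linear_op f \<Longrightarrow> linear_op (f ^^ n)"
  by (induction n) (simp_all add: spoly.linear_ident linear_op_compose id_def comp_def)

lemmas linear_op_intros = spoly_pair.linear_compose_add spoly_pair.linear_compose_sub
  spoly_pair.linear_compose_neg spoly_pair.linear_compose_scale_right spoly.linear_ident
  linear_op_compose[OF linear_dx1] linear_op_compose[OF linear_dx2] linear_op_compose[OF linear_dx3]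
  linear_op_compose[OF linear_mx1] linear_op_compose[OF linear_mx2] linear_op_compose[OF linear_mx3]
  linear_op_compose[OF linear_cl]

lemma linear_mzbar: "linear_op mzbar"
  unfolding mzbar_def[abs_def] by (intro linear_op_intros)
lemma linear_Htil: "linear_op (Htil E1 E2)"
  unfolding Htil_def[abs_def] by (intro linear_op_intros)
lemma linear_Xtil_minus: "linear_op (Xtil_minus E1 E2 E3)"
  unfolding Xtil_minus_def[abs_def] Xminus_def dzbar_def mz_def omega_minus_def
  by (intro linear_op_intros)
lemma linear_Xtil_plus: "linear_op (Xtil_plus E1 E2 E3)"
  unfolding Xtil_plus_def[abs_def] Xplus_def dz_def mzbar_def omega_plus_def
  by (intro linear_op_intros)
lemma linear_dirac: "linear_op (dirac E1 E2 E3)"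
  unfolding dirac_def[abs_def] by (intro linear_op_intros)

definition zbar_pow :: "nat \<Rightarrow> complex^2 \<Rightarrow> spoly" where
  "zbar_pow j v = (mzbar ^^ j) (const_poly v)"

lemma zbar_pow_0: "zbar_pow 0 v = const_poly v"
  by (simp add: zbar_pow_def)

lemma zbar_pow_Suc: "zbar_pow (Suc j) v = mzbar (zbar_pow j v)"
  by (simp add: zbar_pow_def)

lemma linear_zbar_pow: "linear_op (mzbar ^^ j)"
  by (rule linear_op_funpow[OF linear_mzbar])

lemma const_poly_scale: "const_poly (t *s v) = sc t (const_poly v)"
  by (auto simp: fun_eq_iff const_poly_def sc_apply)

lemma zbar_pow_scale: "zbar_pow j (t *s v) = sc t (zbar_pow j v)"
  unfolding zbar_pow_def const_poly_scale by (rule spoly_pair.linear_scale[OF linear_zbar_pow])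

lemma zbar_pow_diff: "zbar_pow j (v - w) = zbar_pow j v - zbar_pow j w"
proof -
  have "const_poly (v - w) = const_poly v - const_poly w"
    by (auto simp: fun_eq_iff const_poly_def minus_apply)
  then show ?thesis
    unfolding zbar_pow_def by (simp add: spoly_pair.linear_diff[OF linear_zbar_pow])
qed

lemma const_poly_zero: "const_poly 0 = 0"
  by (simp add: fun_eq_iff const_poly_def zero_fun_apply)

lemma zbar_pow_zero: "zbar_pow j 0 = 0"
  using zbar_pow_diff[of j 0 0] by simp

lemma cl_zbar_pow: "cl M (zbar_pow j v) = zbar_pow j (M *v v)"
  by (induction j) (simp_all add: zbar_pow_0 zbar_pow_Suc cl_const_poly cl_mzbar)

lemma zbar_pow_leading_coeff: "zbar_pow j v (j,0,0) = v"
  by (induction j) (simp_all add: zbar_pow_0 zbar_pow_Suc const_poly_def mzbar_def minus_apply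
      sc_apply mx1_apply_Suc mx2_apply_0)

lemma homog_mzbar:
  assumes "homog n Q" shows "homog (Suc n) (mzbar Q)"
  unfolding homog_def
proof (intro allI impI)
  fix a b c assume "a + b + c \<noteq> Suc n"
  with assms show "mzbar Q (a,b,c) = 0"
    by (cases a; cases b) (simp_all add: homog_def mzbar_def minus_apply sc_apply coeff_simps)
qed

lemma homog_zbar_pow: "homog j (zbar_pow j v)"
proof (induction j)
  case 0
  show ?case by (simp add: zbar_pow_0 homog_def const_poly_def)
next
  case (Suc j)
  then show ?case by (simp add: zbar_pow_Suc homog_mzbar)
qed

lemma homog_sc: "homog n Q \<Longrightarrow> homog n (sc t Q)"
  by (simp add: homog_def sc_apply)

lemma homog_Xtil_minus:
  assumes "homog n Q" shows "homog n (Xtil_minus E1 E2 E3 Q)"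
  unfolding homog_def
proof (intro allI impI)
  fix a b c assume "a + b + c \<noteq> n"
  with assms show "Xtil_minus E1 E2 E3 Q (a,b,c) = 0"
    by (cases a; cases b; cases c)
      (simp_all add: homog_def operator_defs coeff_simps plus_fun_apply minus_apply)
qed

text \<open>The \<open>x\<^sub>3\<close>-component of \<open>dirac E1 E2 E3 Q = 0\<close> expresses \<open>E3 (\<partial>Q/\<partial>x\<^sub>3)\<close>
  through \<open>x\<^sub>1,x\<^sub>2\<close>-derivatives, and \<open>E3\<close> is invertible; so a monogenic polynomial is
  determined, one power of \<open>x\<^sub>3\<close> at a time, by its restriction to the plane \<open>x\<^sub>3 = 0\<close>.\<close>
lemma monogenic_eq_0_if_plane_restriction_0:
  assumes E3_sq: "E3 ** E3 = - mat 1" and dirac_Q: "dirac E1 E2 E3 Q = 0"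
    and plane: "\<And>a b. Q (a,b,0) = 0"
  shows "Q = 0"
proof -
  have "\<forall>a b. Q (a,b,c) = 0" for c
  proof (induction c)
    case 0
    then show ?case using plane by simp
  next
    case (Suc c)
    show ?case
    proof (intro allI)
      fix a b
      define x where "x = of_nat (c+1) *s Q (a,b,Suc c)"
      have "dirac E1 E2 E3 Q (a,b,c) = 0"
        using dirac_Q by (simp add: zero_fun_apply)
      then have "E3 *v x = 0"
        using Suc.IH by (simp add: x_def dirac_def plus_fun_apply coeff_simps)
      then have "(E3 ** E3) *v x = 0"
        by (simp add: matrix_vector_mul_assoc[symmetric])
      then have "x = 0"
        by (simp add: E3_sq)
      then show "Q (a,b,Suc c) = 0"
        by (simp add: x_def del: of_nat_Suc of_nat_add)
    qed
  qed
  then show ?thesis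
    by (auto simp: fun_eq_iff zero_fun_apply)
qed

lemma (in vector_space) eigenvectors_linear_independent:
  fixes n :: nat
  assumes f: "Vector_Spaces.linear scale scale f"
    and eigen: "\<And>j. j \<le> n \<Longrightarrow> f (v j) = scale (\<mu> j) (v j)"
    and nonzero: "\<And>j. j \<le> n \<Longrightarrow> v j \<noteq> 0"
    and distinct: "inj_on \<mu> {..n}"
    and sum_0: "(\<Sum>j\<le>n. scale (c j) (v j)) = 0"
  shows "\<forall>j\<le>n. c j = 0"
proof -
  have f_hom: "module_hom scale scale f"
    using f by (simp add: module_hom_iff_linear)
  from eigen nonzero distinct sum_0 show ?thesis
  proof (induction n arbitrary: c)
    case 0
    then show ?case by simp
  next
    case (Suc n)
    let ?l = "\<mu> (Suc n)"
    let ?S = "\<Sum>j\<le>Suc n. scale (c j) (v j)"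
    have "f ?S = (\<Sum>j\<le>Suc n. scale (c j) (f (v j)))"
      by (simp only: module_hom.sum[OF f_hom] module_hom.scale[OF f_hom])
    also have "\<dots> = (\<Sum>j\<le>Suc n. scale (c j * \<mu> j) (v j))"
      using Suc.prems(1) by (intro sum.cong) simp_all
    finally have f_S: "f ?S = (\<Sum>j\<le>Suc n. scale (c j * \<mu> j) (v j))" .
    have "(\<Sum>j\<le>Suc n. scale (c j * (\<mu> j - ?l)) (v j))
        = (\<Sum>j\<le>Suc n. scale (c j * \<mu> j) (v j) - scale ?l (scale (c j) (v j)))"
      by (intro sum.cong) (simp_all add: right_diff_distrib scale_left_diff_distrib mult.commute)
    also have "\<dots> = f ?S - scale ?l ?S"
      by (simp only: f_S sum_subtractf scale_sum_right)
    also have "\<dots> = 0"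
      using Suc.prems(4) module_hom.zero[OF f_hom] by simp
    finally have "(\<Sum>j\<le>n. scale (c j * (\<mu> j - ?l)) (v j)) = 0"
      by simp
    moreover have "inj_on \<mu> {..n}"
      using Suc.prems(3) by (rule inj_on_subset) auto
    ultimately have "\<forall>j\<le>n. c j * (\<mu> j - ?l) = 0"
      using Suc.IH[of "\<lambda>j. c j * (\<mu> j - ?l)"] Suc.prems(1,2) by simp
    moreover have "\<mu> j \<noteq> ?l" if "j \<le> n" for j
      using Suc.prems(3) that by (auto dest: inj_onD)
    ultimately have low: "\<forall>j\<le>n. c j = 0"
      by simp
    then have "scale (c (Suc n)) (v (Suc n)) = 0"
      using Suc.prems(4) by simp
    then have "c (Suc n) = 0"
      using Suc.prems(2)[of "Suc n"] by simp
    with low show ?case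
      using le_Suc_eq by auto
  qed
qed

locale spin_highest_weight = clifford3 +
  fixes vp :: "complex^2"
  assumes vp_nonzero: "vp \<noteq> 0" and vp_weight: "(-\<i>) *s ((E1 ** E2) *v vp) = vp"
begin

abbreviation "H \<equiv> Htil E1 E2"
abbreviation "X \<equiv> Xtil_minus E1 E2 E3"
abbreviation "Y \<equiv> Xtil_plus E1 E2 E3"
abbreviation "D \<equiv> dirac E1 E2 E3"
abbreviation "F k \<equiv> Fj E1 E2 E3 k vp"

lemma E12_vp: "(E1 ** E2) *v vp = \<i> *s vp"
proof -
  have "\<i> *s ((-\<i>) *s ((E1 ** E2) *v vp)) = \<i> *s vp"
    using vp_weight by simp
  then show ?thesis
    by (simp add: vector_smult_assoc)
qed

lemma E1_vp: "E1 *v vp = \<i> *s (E2 *v vp)"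
proof -
  have "- (E2 *v vp) = \<i> *s (E1 *v vp)"
    using arg_cong[OF E12_vp, of "\<lambda>w. E1 *v w"]
    by (simp add: matrix_vector_mul_assoc matrix_mul_assoc E1_sq vector_scalar_commute)
  then have "\<i> *s (- (E2 *v vp)) = \<i> *s (\<i> *s (E1 *v vp))"
    by simp
  then show ?thesis
    by (simp add: vector_smult_assoc vector_smult_rneg)
qed

lemma omega_plus_vp: "(E3 ** E1) *v vp + \<i> *s ((E2 ** E3) *v vp) = 0"
proof -
  have "\<i> *s ((E2 ** E3) *v vp) = - (E3 *v (\<i> *s (E2 *v vp)))"
    by (simp add: matrix_vector_mul_assoc E3_E2 vector_scalar_commute vector_smult_rneg)
  then show ?thesis
    by (simp add: matrix_vector_mul_assoc E1_vp[symmetric])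
qed

lemma Htil_zbar_pow: "H (zbar_pow j vp) = sc (of_nat j + 1/2) (zbar_pow j vp)"
proof (induction j)
  case 0
  have "(-\<i>/2) *s ((E1 ** E2) *v vp) = (1/2) *s vp"
    by (simp add: E12_vp vector_smult_assoc)
  then have "H (const_poly vp) = sc (1/2) (const_poly vp)"
    by (simp only: Htil_const_poly const_poly_scale)
  then show ?case
    by (simp add: zbar_pow_0)
next
  case (Suc j)
  have "H (zbar_pow (Suc j) vp)
      = sc (of_nat j + 1/2) (mzbar (zbar_pow j vp)) + mzbar (zbar_pow j vp)"
    by (simp only: zbar_pow_Suc Htil_mzbar Suc spoly_pair.linear_scale[OF linear_mzbar])
  also have "\<dots> = sc (of_nat j + 1/2 + 1) (mzbar (zbar_pow j vp))"
    by (simp only: spoly.scale_left_distrib spoly.scale_one)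
  finally show ?case
    by (simp add: zbar_pow_Suc add_ac)
qed

text \<open>Commuting the Dirac operator past multiplication by \<open>zbar\<close> leaves the term
  \<open>(E1 - i E2) vp\<close>, which vanishes by \<open>E1_vp\<close>.\<close>
lemma dirac_zbar_pow: "D (zbar_pow j vp) = 0"
proof (induction j)
  case 0
  show ?case by (simp add: zbar_pow_0 dirac_const_poly)
next
  case (Suc j)
  have "D (zbar_pow (Suc j) vp)
      = mzbar (D (zbar_pow j vp)) + cl E1 (zbar_pow j vp) - sc \<i> (cl E2 (zbar_pow j vp))"
    by (simp add: zbar_pow_Suc dirac_mzbar)
  also have "\<dots> = zbar_pow j (E1 *v vp - \<i> *s (E2 *v vp))"
    by (simp only: Suc spoly_pair.linear_0[OF linear_mzbar] cl_zbar_pow zbar_pow_scale zbar_pow_diff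
        add_0_left)
  also have "\<dots> = 0"
    by (simp add: E1_vp zbar_pow_zero)
  finally show ?case .
qed

lemma Xtil_plus_zbar_pow: "Y (zbar_pow j vp) = 0"
proof (induction j)
  case 0
  show ?case
    by (simp only: zbar_pow_0 Xtil_plus_const_poly omega_plus_vp vector_smult_rzero const_poly_zero)
next
  case (Suc j)
  then show ?case
    by (simp only: zbar_pow_Suc Xtil_plus_mzbar spoly_pair.linear_0[OF linear_mzbar])
qed

lemma F_0: "F k 0 = sc (1 / (of_nat (fact k) * 2 ^ k)) (zbar_pow k vp)"
  by (simp add: Fj_def F0_def zbar_pow_def)

lemma F_Suc: "F k (Suc j) = X (F k j)"
  by (simp add: Fj_def)

lemma Htil_F: "H (F k j) = sc (of_nat k + 1/2 - of_nat j) (F k j)"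
proof (induction j)
  case 0
  show ?case
    by (simp add: F_0 spoly_pair.linear_scale[OF linear_Htil] Htil_zbar_pow mult.commute)
next
  case (Suc j)
  have "H (F k (Suc j)) = X (H (F k j)) - X (F k j)"
    by (simp add: F_Suc Htil_Xtil_minus)
  also have "\<dots> = sc (of_nat k + 1/2 - of_nat j) (X (F k j)) - sc 1 (X (F k j))"
    by (simp only: Suc spoly_pair.linear_scale[OF linear_Xtil_minus] spoly.scale_one)
  also have "\<dots> = sc (of_nat k + 1/2 - of_nat j - 1) (X (F k j))"
    by (simp only: spoly.scale_left_diff_distrib)
  finally show ?case
    by (simp add: F_Suc algebra_simps)
qed

lemma dirac_F: "D (F k j) = 0"
  by (induction j) (simp_all add: F_0 F_Suc spoly_pair.linear_scale[OF linear_dirac]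
      dirac_zbar_pow dirac_Xtil_minus spoly_pair.linear_0[OF linear_Xtil_minus])

lemma homog_F: "homog k (F k j)"
  by (induction j) (simp_all add: F_0 F_Suc homog_sc homog_zbar_pow homog_Xtil_minus)

lemma F_in_Mk: "F k j \<in> Mk E1 E2 E3 k"
  by (simp add: Mk_def homog_F dirac_F)

text \<open>By \<open>[X\<^sup>+, X\<^sup>-] = 2H\<close> the coefficient is \<open>\<Sum>i\<le>j. 2 (k + 1/2 - i) = (j + 1) (2k + 1 - j)\<close>;
  it vanishes first at \<open>j = 2k + 1\<close>, which is why the family stops there.\<close>
lemma Xtil_plus_F_Suc:
  "Y (F k (Suc j)) = sc (of_nat (Suc j) * (2 * of_nat k + 1 - of_nat j)) (F k j)"
proof (induction j)
  case 0
  have "Y (F k 0) = 0"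
    by (simp add: F_0 spoly_pair.linear_scale[OF linear_Xtil_plus] Xtil_plus_zbar_pow)
  then show ?case
    by (simp add: F_Suc Xtil_plus_Xtil_minus spoly_pair.linear_0[OF linear_Xtil_minus] Htil_F
        algebra_simps)
next
  case (Suc j)
  have "Y (F k (Suc (Suc j))) = X (Y (F k (Suc j))) + sc 2 (H (F k (Suc j)))"
    by (simp add: F_Suc Xtil_plus_Xtil_minus)
  also have "\<dots> = sc (of_nat (Suc j) * (2 * of_nat k + 1 - of_nat j)
      + 2 * (of_nat k + 1/2 - of_nat (Suc j))) (F k (Suc j))"
    by (simp only: Suc Htil_F spoly_pair.linear_scale[OF linear_Xtil_minus] F_Suc[symmetric]
        spoly.scale_scale spoly.scale_left_distrib)
  finally show ?case
    by (simp add: algebra_simps)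
qed

lemma F_nonzero: "j \<le> 2*k+1 \<Longrightarrow> F k j \<noteq> 0"
proof (induction j)
  case 0
  have "F k 0 (k,0,0) = (1 / (of_nat (fact k) * 2 ^ k)) *s vp"
    by (simp add: F_0 sc_apply zbar_pow_leading_coeff)
  then show ?case
    using vp_nonzero by (auto simp: zero_fun_apply)
next
  case (Suc j)
  have "(2 * of_nat k + 1 - of_nat j :: complex) = of_nat (2*k+1-j)"
    using Suc.prems by (simp add: of_nat_diff)
  then have "(of_nat (Suc j) * (2 * of_nat k + 1 - of_nat j) :: complex) \<noteq> 0"
    using Suc.prems by (simp del: of_nat_Suc)
  moreover have "F k j \<noteq> 0"
    using Suc by simp
  ultimately have "Y (F k (Suc j)) \<noteq> 0"
    by (simp add: Xtil_plus_F_Suc)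
  then show ?case
    using spoly_pair.linear_0[OF linear_Xtil_plus] by auto
qed

lemma F_independent:
  "(\<Sum>j\<le>2*k+1. sc (c j) (F k j)) = 0 \<Longrightarrow> \<forall>j\<le>2*k+1. c j = 0"
  by (rule spoly.eigenvectors_linear_independent[OF linear_Htil Htil_F F_nonzero])
    (auto simp: inj_on_def)

lemma inj_on_F: "inj_on (F k) {..2*k+1}"
proof (rule inj_onI)
  fix i j assume "i \<in> {..2*k+1}" and F_eq: "F k i = F k j"
  then have "sc (of_nat k + 1/2 - of_nat i) (F k i) = sc (of_nat k + 1/2 - of_nat j) (F k i)"
    by (metis Htil_F)
  with \<open>i \<in> {..2*k+1}\<close> have "(of_nat k + 1/2 - of_nat i :: complex) = of_nat k + 1/2 - of_nat j"
    using F_nonzero spoly.scale_cancel_right by auto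
  then show "i = j"
    by simp
qed

end

definition plane_restriction :: "spoly \<Rightarrow> spoly" where
  "plane_restriction Q = (\<lambda>(a,b,c). if c = 0 then Q (a,b,c) else 0)"

definition monomial :: "nat \<times> nat \<times> nat \<Rightarrow> complex^2 \<Rightarrow> spoly" where
  "monomial m v = (\<lambda>m'. if m' = m then v else 0)"

definition plane_monomials :: "nat \<Rightarrow> spoly set" where
  "plane_monomials k = (\<lambda>(a,i). monomial (a, k - a, 0) (axis i 1)) ` ({..k} \<times> UNIV)"

lemma sum_fun_apply: "(\<Sum>a\<in>A. f a) x = (\<Sum>a\<in>A. f a x)"
  by (induction A rule: infinite_finite_induct) (simp_all add: plus_fun_apply zero_fun_apply)

lemma linear_plane_restriction: "linear_op plane_restriction"
  by (rule linear_opI) (auto simp: fun_eq_iff plane_restriction_def plus_fun_apply sc_apply)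

lemma plane_restriction_eq_sum:
  assumes "homog k Q"
  shows "plane_restriction Q = (\<Sum>a\<le>k. monomial (a, k - a, 0) (Q (a, k - a, 0)))"
proof (rule spoly_eqI)
  fix a' b' c'
  have sum_eq: "(\<Sum>a\<le>k. monomial (a, k - a, 0) (Q (a, k - a, 0))) (a',b',c')
      = (\<Sum>a\<le>k. if a' = a \<and> b' = k - a \<and> c' = 0 then Q (a, k - a, 0) else 0)"
    by (simp add: sum_fun_apply monomial_def)
  show "plane_restriction Q (a',b',c')
      = (\<Sum>a\<le>k. monomial (a, k - a, 0) (Q (a, k - a, 0))) (a',b',c')"
  proof (cases "c' = 0 \<and> a' + b' = k")
    case True
    then have "(\<Sum>a\<le>k. if a' = a \<and> b' = k - a \<and> c' = 0 then Q (a, k - a, 0) else 0)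
        = (\<Sum>a\<le>k. if a' = a then Q (a',b',0) else 0)"
      by (intro sum.cong) auto
    also have "\<dots> = Q (a',b',0)"
      using True by simp
    finally show ?thesis
      using True sum_eq by (simp add: plane_restriction_def)
  next
    case False
    then show ?thesis
      using sum_eq assms by (auto simp: plane_restriction_def homog_def intro!: sum.neutral)
  qed
qed

lemma monomial_eq_sum_axis: "monomial m v = (\<Sum>i\<in>UNIV. sc (v $ i) (monomial m (axis i 1)))"
  by (rule ext) (simp add: sum_fun_apply sc_apply monomial_def basis_expansion)

lemma plane_restriction_in_span:
  assumes "homog k Q"
  shows "plane_restriction Q \<in> spoly.span (plane_monomials k)"
proof -
  have "monomial (a, k - a, 0) v \<in> spoly.span (plane_monomials k)" if "a \<le> k" for a v
  proof -
    have "monomial (a, k - a, 0) (axis i 1) \<in> plane_monomials k" for i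
      unfolding plane_monomials_def using that by (auto intro!: image_eqI[where x="(a,i)"])
    then show ?thesis
      unfolding monomial_eq_sum_axis[of _ v]
      by (intro spoly.span_sum spoly.span_scale spoly.span_base)
  qed
  then show ?thesis
    unfolding plane_restriction_eq_sum[OF assms] by (intro spoly.span_sum) auto
qed

lemma card_plane_monomials: "card (plane_monomials k) \<le> 2 * k + 2"
proof -
  have "card (plane_monomials k) \<le> card ({..k} \<times> (UNIV :: 2 set))"
    unfolding plane_monomials_def by (rule card_image_le) simp
  also have "\<dots> = 2 * k + 2"
    by (simp add: card_cartesian_product)
  finally show ?thesis .
qed

lemma subspace_Mk: "spoly.subspace (Mk E1 E2 E3 k)"
  unfolding spoly.subspace_def Mk_def
  by (auto simp: spoly_pair.linear_0[OF linear_dirac] spoly_pair.linear_add[OF linear_dirac]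
      spoly_pair.linear_scale[OF linear_dirac] homog_def plus_fun_apply sc_apply zero_fun_apply)

lemma inj_on_plane_restriction_Mk:
  assumes "E3 ** E3 = - mat 1"
  shows "inj_on plane_restriction (Mk E1 E2 E3 k)"
  unfolding spoly_pair.linear_inj_on_iff_eq_0[OF linear_plane_restriction subspace_Mk]
proof (intro ballI impI)
  fix Q assume Q: "Q \<in> Mk E1 E2 E3 k" and restr_0: "plane_restriction Q = 0"
  show "Q = 0"
  proof (rule monogenic_eq_0_if_plane_restriction_0[OF assms])
    show "dirac E1 E2 E3 Q = 0"
      using Q by (simp add: Mk_def)
    show "Q (a,b,0) = 0" for a b
      using fun_cong[OF restr_0, of "(a,b,0)"] by (simp add: plane_restriction_def zero_fun_apply)
  qed
qed

lemma card_independent_Mk_le: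
  assumes "E3 ** E3 = - mat 1" and "spoly.independent A" and "A \<subseteq> Mk E1 E2 E3 k"
  shows "card A \<le> 2 * k + 2"
proof -
  have inj: "inj_on plane_restriction A"
    using inj_on_plane_restriction_Mk[OF assms(1)] assms(3) by (rule inj_on_subset)
  have "spoly.span A \<subseteq> Mk E1 E2 E3 k"
    using assms(3) subspace_Mk by (rule spoly.span_minimal)
  then have "spoly.independent (plane_restriction ` A)"
    by (intro spoly_pair.linear_independent_injective_image[OF linear_plane_restriction assms(2)]
        inj_on_subset[OF inj_on_plane_restriction_Mk[OF assms(1)]])
  moreover have "plane_restriction ` A \<subseteq> spoly.span (plane_monomials k)"
    using assms(3) by (auto simp: Mk_def intro!: plane_restriction_in_span)
  ultimately have "card (plane_restriction ` A) \<le> card (plane_monomials k)"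
    using spoly.independent_span_bound[of "plane_monomials k"] by (simp add: plane_monomials_def)
  then show ?thesis
    using card_image[OF inj] card_plane_monomials[of k] by simp
qed

context spin_highest_weight
begin

lemma F_spans_Mk:
  assumes "P \<in> Mk E1 E2 E3 k"
  shows "\<exists>c. P = (\<Sum>j\<le>2*k+1. sc (c j) (F k j))"
proof -
  define B where "B = F k ` {..2*k+1}"
  have finite_B: "finite B" and card_B: "card B = 2*k+2"
    using card_image[OF inj_on_F] by (simp_all add: B_def)
  have B_Mk: "B \<subseteq> Mk E1 E2 E3 k"
    using F_in_Mk by (auto simp: B_def)
  have independent_B: "spoly.independent B"
  proof
    assume "spoly.dependent B"
    then obtain u where u: "\<exists>v\<in>B. u v \<noteq> 0" "(\<Sum>v\<in>B. sc (u v) v) = 0"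
      using spoly.dependent_finite[OF finite_B] by blast
    have "(\<Sum>j\<le>2*k+1. sc (u (F k j)) (F k j)) = 0"
      using u(2) by (simp only: B_def sum.reindex[OF inj_on_F] comp_def)
    then have "\<forall>j\<le>2*k+1. u (F k j) = 0"
      by (rule F_independent)
    with u(1) show False
      by (auto simp: B_def)
  qed
  have "P \<in> spoly.span B"
  proof (rule ccontr)
    assume P_notin: "P \<notin> spoly.span B"
    then have "P \<notin> B"
      using spoly.span_base by blast
    then have "card (insert P B) = 2*k+3"
      using finite_B card_B by simp
    moreover have "card (insert P B) \<le> 2*k+2"
      using P_notin independent_B B_Mk assms
      by (intro card_independent_Mk_le[OF E3_sq] spoly.independent_insertI) auto
    ultimately show False
      by simp
  qed
  then obtain u where "P = (\<Sum>v\<in>B. sc (u v) v)"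
    using spoly.span_finite[OF finite_B] by auto
  then have "P = (\<Sum>j\<le>2*k+1. sc (u (F k j)) (F k j))"
    by (simp only: B_def sum.reindex[OF inj_on_F] comp_def)
  then show ?thesis
    by (rule exI[of _ "\<lambda>j. u (F k j)"])
qed

end

theorem proposition3p1:
  fixes E1 E2 E3 :: "complex^2^2" and vp vm :: "complex^2" and k :: nat
  assumes "E1 ** E1 = - mat 1" and "E2 ** E2 = - mat 1" and "E3 ** E3 = - mat 1"
    and "E1 ** E2 + E2 ** E1 = 0" and "E1 ** E3 + E3 ** E1 = 0" and "E2 ** E3 + E3 ** E2 = 0"
    and "vp \<noteq> 0" and "(-\<i>) *s ((E1 ** E2) *v vp) = vp"
    and "vm \<noteq> 0" and "(-\<i>) *s ((E1 ** E2) *v vm) = - vm"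
  shows "is_basis_fam (Fj E1 E2 E3 k vp) (2*k+1) (Mk E1 E2 E3 k)
    \<and> (\<forall>j\<le>2*k+1. Htil E1 E2 (Fj E1 E2 E3 k vp j)
          = sc (of_nat k + 1/2 - of_nat j) (Fj E1 E2 E3 k vp j))"
proof -
  interpret spin_highest_weight E1 E2 E3 vp
    by unfold_locales (use assms in auto)
  show ?thesis
    unfolding is_basis_fam_def using F_in_Mk F_independent F_spans_Mk Htil_F by blast
qed

end
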